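(* Let $(\Omega,\mathcal F,\mathbb P_0)$ be a probability space carrying a two-dimensional Brownian motion $W=(W^1,W^2)$, let $\mathbb F^W$ be its $\mathbb P_0$-augmented natural filtration, and for $i=0,1$ let $\mathcal A^i_{\rm S}$ be the set of $\mathbb F^W$-progressively measurable processes with values in $[-1,1]$. Fix constants $c\in\mathbb R$ and $\rho\in[-1,1]$. For $\alpha=(\alpha^0,\alpha^1)\in\mathcal A^0_{\rm S}\times\mathcal A^1_{\rm S}$ put $$X^{1,\alpha}_t:=\int_0^t\alpha^0_s\,ds+cW^1_t,\qquad X^{2,\alpha}_t:=\int_0^t\alpha^1_s\,ds+c\big(\rho W^1_t+\sqrt{1-\rho^2}\,W^2_t\big),\qquad J_{\rm S}(\alpha):=\mathbb E^{\mathbb P_0}\big[|X^{1,\alpha}_T-X^{2,\alpha}_T|^2\big],$$ and define $\overline V^{\rm S}_0:=\inf_{\alpha^0\in\mathcal A^0_{\rm S}}\sup_{\alpha^1\in\mathcal A^1_{\rm S}}J_{\rm S}(\alpha^0,\alpha^1)$ and $\underline V^{\rm S}_0:=\sup_{\alpha^1\in\mathcal A^1_{\rm S}}\inf_{\alpha^0\in\mathcal A^0_{\rm S}}J_{\rm S}(\alpha^0,\alpha^1)$. Then $$\underline V^{\rm S}_0\le 2(1-\rho)c^2T\qquad\text{and}\qquad T^2\le\overline V^{\rm S}_0 .$$ In particular $\underline V^{\rm S}_0<\overline V^{\rm S}_0$ whenever $2(1-\rho)c^2<T$.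
   Context: This is the "strong formulation with control against control" of a zero-sum game with fixed time horizon $T>0$, drift $b(t,x,a)=(a_0,a_1)^\top$, constant volatility $\begin{pmatrix}c&0\\ c\rho& c\sqrt{1-\rho^2}\end{pmatrix}$, running cost $0$ and terminal cost $g(x)=|x_1-x_2|^2$. *)

theory Defs
  imports "HOL-Probability.Probability"
begin

definition rv_sigma :: "'a measure \<Rightarrow> ('a \<Rightarrow> real) \<Rightarrow> 'a set set" where
  "rv_sigma M X = {X -` A \<inter> space M | A. A \<in> sets borel}"

definition nat_filt :: "'a measure \<Rightarrow> (real \<Rightarrow> 'a \<Rightarrow> real) \<Rightarrow> (real \<Rightarrow> 'a \<Rightarrow> real) \<Rightarrow> real \<Rightarrow> 'a set set" where
  "nat_filt M W1 W2 t = sigma_sets (space M) (\<Union>u\<in>{0..t}. rv_sigma M (W1 u) \<union> rv_sigma M (W2 u))"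

text \<open>P-augmentation by the P-null sets of F (= sets M): sigma(F_t \<union> N)
  which equals the sets A in F differing from some B in F_t by a null set\<close>
definition aug_filt :: "'a measure \<Rightarrow> (real \<Rightarrow> 'a \<Rightarrow> real) \<Rightarrow> (real \<Rightarrow> 'a \<Rightarrow> real) \<Rightarrow> real \<Rightarrow> 'a measure" where
  "aug_filt M W1 W2 t = sigma (space M)
     (sigma_sets (space M) (nat_filt M W1 W2 t \<union> null_sets M))"

definition brownian_motion_2d :: "'a measure \<Rightarrow> (real \<Rightarrow> 'a \<Rightarrow> real) \<Rightarrow> (real \<Rightarrow> 'a \<Rightarrow> real) \<Rightarrow> bool" where
  "brownian_motion_2d M W1 W2 \<longleftrightarrow>
     prob_space M \<and>
     (\<forall>t. W1 t \<in> borel_measurable M \<and> W2 t \<in> borel_measurable M) \<and>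
     (AE \<omega> in M. W1 0 \<omega> = 0 \<and> W2 0 \<omega> = 0 \<and>
        continuous_on {0..} (\<lambda>t. W1 t \<omega>) \<and> continuous_on {0..} (\<lambda>t. W2 t \<omega>)) \<and>
     (\<forall>s t. 0 \<le> s \<longrightarrow> s < t \<longrightarrow>
        distributed M lborel (\<lambda>\<omega>. W1 t \<omega> - W1 s \<omega>) (normal_density 0 (sqrt (t - s))) \<and>
        distributed M lborel (\<lambda>\<omega>. W2 t \<omega> - W2 s \<omega>) (normal_density 0 (sqrt (t - s))) \<and>
        prob_space.indep_sets M
          (\<lambda>i::nat. if i = 0 then nat_filt M W1 W2 s
                    else if i = 1 then rv_sigma M (\<lambda>\<omega>. W1 t \<omega> - W1 s \<omega>)
                    else rv_sigma M (\<lambda>\<omega>. W2 t \<omega> - W2 s \<omega>)) {0, 1, 2})"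

definition strong_controls :: "'a measure \<Rightarrow> (real \<Rightarrow> 'a \<Rightarrow> real) \<Rightarrow> (real \<Rightarrow> 'a \<Rightarrow> real) \<Rightarrow> real \<Rightarrow> (real \<Rightarrow> 'a \<Rightarrow> real) set" where
  "strong_controls M W1 W2 T =
     {\<alpha>. (\<forall>t\<in>{0..T}. (\<lambda>(s, \<omega>). \<alpha> s \<omega>) \<in>
             borel_measurable (restrict_space borel {0..t} \<Otimes>\<^sub>M aug_filt M W1 W2 t)) \<and>
         (\<forall>s\<in>{0..T}. \<forall>\<omega>\<in>space M. \<alpha> s \<omega> \<in> {-1..1})}"

definition X1 :: "real \<Rightarrow> (real \<Rightarrow> 'a \<Rightarrow> real) \<Rightarrow> (real \<Rightarrow> 'a \<Rightarrow> real) \<Rightarrow> real \<Rightarrow> 'a \<Rightarrow> real" where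
  "X1 c W1 a0 t \<omega> = (\<integral>s\<in>{0..t}. a0 s \<omega> \<partial>lborel) + c * W1 t \<omega>"

definition X2 :: "real \<Rightarrow> real \<Rightarrow> (real \<Rightarrow> 'a \<Rightarrow> real) \<Rightarrow> (real \<Rightarrow> 'a \<Rightarrow> real) \<Rightarrow> (real \<Rightarrow> 'a \<Rightarrow> real) \<Rightarrow> real \<Rightarrow> 'a \<Rightarrow> real" where
  "X2 c \<rho> W1 W2 a1 t \<omega> = (\<integral>s\<in>{0..t}. a1 s \<omega> \<partial>lborel)
      + c * (\<rho> * W1 t \<omega> + sqrt (1 - \<rho>\<^sup>2) * W2 t \<omega>)"

definition J_S :: "'a measure \<Rightarrow> real \<Rightarrow> real \<Rightarrow> real \<Rightarrow> (real \<Rightarrow> 'a \<Rightarrow> real) \<Rightarrow> (real \<Rightarrow> 'a \<Rightarrow> real)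
    \<Rightarrow> (real \<Rightarrow> 'a \<Rightarrow> real) \<Rightarrow> (real \<Rightarrow> 'a \<Rightarrow> real) \<Rightarrow> real" where
  "J_S M c \<rho> T W1 W2 a0 a1 =
     (\<integral>\<omega>. \<bar>X1 c W1 a0 T \<omega> - X2 c \<rho> W1 W2 a1 T \<omega>\<bar>\<^sup>2 \<partial>M)"

definition upper_value_S where
  "upper_value_S M c \<rho> T W1 W2 =
     (INF a0\<in>strong_controls M W1 W2 T. SUP a1\<in>strong_controls M W1 W2 T. J_S M c \<rho> T W1 W2 a0 a1)"

definition lower_value_S where
  "lower_value_S M c \<rho> T W1 W2 =
     (SUP a1\<in>strong_controls M W1 W2 T. INF a0\<in>strong_controls M W1 W2 T. J_S M c \<rho> T W1 W2 a0 a1)"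

end

theory Submission
  imports Defs
begin

text \<open>Write \<open>A\<^sub>i = \<integral>\<^sub>0\<^sup>T \<alpha>\<^sup>i\<^sub>s ds\<close>, so that \<open>|A\<^sub>i| \<le> T\<close> and
  \<open>X\<^sup>1\<^sub>T - X\<^sup>2\<^sub>T = A\<^sub>0 - A\<^sub>1 + Z\<close> with \<open>Z = c(1 - \<rho>)W\<^sup>1\<^sub>T - c\<surd>(1 - \<rho>\<^sup>2) W\<^sup>2\<^sub>T\<close>, a centred
  Gaussian with \<open>E Z\<^sup>2 = 2(1 - \<rho>)c\<^sup>2T\<close>.
  Player 1 may copy player 0's control, which cancels the drifts and gives the bound on the
  lower value. Against any control of player 0, one of the two constant controls \<open>\<plusminus>1\<close>
  already yields at least \<open>T\<^sup>2\<close>, since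
  \<open>E (A\<^sub>0 - T + Z)\<^sup>2 + E (A\<^sub>0 + T + Z)\<^sup>2 = 2 E (A\<^sub>0 + Z)\<^sup>2 + 2T\<^sup>2\<close>;
  this gives the bound on the upper value.\<close>

lemma sup_inf_le_diagonal:
  fixes J :: "'b \<Rightarrow> 'b \<Rightarrow> 'c :: conditionally_complete_lattice"
  assumes "C \<noteq> {}" and "\<And>a0 a1. a0 \<in> C \<Longrightarrow> a1 \<in> C \<Longrightarrow> m \<le> J a0 a1"
    and "\<And>a. a \<in> C \<Longrightarrow> J a a \<le> v"
  shows "(SUP a1\<in>C. INF a0\<in>C. J a0 a1) \<le> v"
proof (rule cSUP_least[OF assms(1)])
  fix a1 assume a1: "a1 \<in> C"
  have "(INF a0\<in>C. J a0 a1) \<le> J a1 a1"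
    using a1 assms(2) by (intro cINF_lower[OF bdd_belowI2[where m = m]]) auto
  also have "\<dots> \<le> v" by (rule assms(3)[OF a1])
  finally show "(INF a0\<in>C. J a0 a1) \<le> v" .
qed

lemma inf_sup_ge_of_best_response:
  fixes J :: "'b \<Rightarrow> 'b \<Rightarrow> 'c :: conditionally_complete_lattice"
  assumes "C \<noteq> {}" and "\<And>a0 a1. a0 \<in> C \<Longrightarrow> a1 \<in> C \<Longrightarrow> J a0 a1 \<le> m"
    and "\<And>a0. a0 \<in> C \<Longrightarrow> \<exists>a1\<in>C. w \<le> J a0 a1"
  shows "w \<le> (INF a0\<in>C. SUP a1\<in>C. J a0 a1)"
proof (rule cINF_greatest[OF assms(1)])
  fix a0 assume a0: "a0 \<in> C"
  then obtain a1 where a1: "a1 \<in> C" "w \<le> J a0 a1" using assms(3) by blast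
  have "J a0 a1 \<le> (SUP a1\<in>C. J a0 a1)"
    using a0 a1(1) assms(2) by (intro cSUP_upper[OF _ bdd_aboveI2[where M = m]]) auto
  with a1(2) show "w \<le> (SUP a1\<in>C. J a0 a1)" by order
qed

lemma square_diff_add_le:
  fixes u v z T :: real
  assumes "\<bar>u\<bar> \<le> T" "\<bar>v\<bar> \<le> T"
  shows "(u - v + z)\<^sup>2 \<le> 8 * T\<^sup>2 + 2 * z\<^sup>2"
proof -
  have "(u - v + z)\<^sup>2 \<le> 2 * (u - v)\<^sup>2 + 2 * z\<^sup>2"
    using zero_le_power2[of "u - v - z"] by (simp add: power2_eq_square algebra_simps)
  moreover have "(u - v)\<^sup>2 \<le> (2 * T)\<^sup>2"
    using assms unfolding abs_le_square_iff[symmetric] by linarith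
  ultimately show ?thesis by (simp add: power_mult_distrib)
qed

lemma abs_set_integral_le_length:
  fixes a :: "real \<Rightarrow> real"
  assumes "\<And>s. s \<in> {0..T} \<Longrightarrow> \<bar>a s\<bar> \<le> 1" "T \<ge> 0"
  shows "\<bar>\<integral>s\<in>{0..T}. a s \<partial>lborel\<bar> \<le> T"
proof (cases "integrable lborel (\<lambda>s. indicator {0..T} s *\<^sub>R a s)")
  case True
  have "\<bar>\<integral>s. indicator {0..T} s *\<^sub>R a s \<partial>lborel\<bar> \<le> (\<integral>s. norm (indicator {0..T} s *\<^sub>R a s) \<partial>lborel)"
    using integral_norm_bound[of lborel "\<lambda>s. indicator {0..T} s *\<^sub>R a s"] by simp
  also have "\<dots> \<le> (\<integral>s. indicator {0..T} s \<partial>lborel)"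
  proof (rule integral_mono)
    show "integrable lborel (indicator {0..T} :: real \<Rightarrow> real)"
      using integrable_indicator[of "{0..T}" lborel "1::real"] assms(2) by simp
  qed (use True assms(1) in \<open>auto simp: indicator_def\<close>)
  also have "\<dots> = T" using assms(2) by simp
  finally show ?thesis by (simp add: set_lebesgue_integral_def)
next
  case False
  then show ?thesis using assms(2) by (simp add: set_lebesgue_integral_def not_integrable_integral_eq)
qed

lemma measurable_id_aug_filt:
  assumes "\<And>t. W1 t \<in> borel_measurable M" "\<And>t. W2 t \<in> borel_measurable M"
  shows "id \<in> measurable M (aug_filt M W1 W2 t)"
proof -
  have rv_sigma_sets: "rv_sigma M X \<subseteq> sets M" if "X \<in> borel_measurable M" for X
    using that unfolding rv_sigma_def by (auto intro: measurable_sets)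
  have "nat_filt M W1 W2 t \<subseteq> sets M"
    unfolding nat_filt_def using rv_sigma_sets assms by (intro sets.sigma_sets_subset) auto
  then have "sigma_sets (space M) (nat_filt M W1 W2 t \<union> null_sets M) \<subseteq> sets M"
    by (intro sets.sigma_sets_subset) auto
  then show ?thesis
    unfolding aug_filt_def
    by (intro measurable_measure_of) (use sets.sets_into_space in \<open>auto simp: vimage_def\<close>)
qed

lemma borel_measurable_control_integral:
  assumes "\<And>t. W1 t \<in> borel_measurable M" "\<And>t. W2 t \<in> borel_measurable M"
    and a: "a \<in> strong_controls M W1 W2 T" and T: "T \<ge> 0"
  shows "(\<lambda>\<omega>. \<integral>s\<in>{0..T}. a s \<omega> \<partial>lborel) \<in> borel_measurable M"
proof -
  have progressive: "(\<lambda>(s, \<omega>). a s \<omega>) \<in> borel_measurable (restrict_space borel {0..T} \<Otimes>\<^sub>M aug_filt M W1 W2 T)"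
    using a T unfolding strong_controls_def by auto
  have "fst \<in> measurable (restrict_space lborel {0..T} \<Otimes>\<^sub>M M) (restrict_space borel {0..T})"
    using measurable_fst[of "restrict_space lborel {0..T}" M]
    by (simp add: measurable_cong_sets sets_restrict_space)
  moreover have "snd \<in> measurable (restrict_space lborel {0..T} \<Otimes>\<^sub>M M) (aug_filt M W1 W2 T)"
    using measurable_comp[OF measurable_snd measurable_id_aug_filt[OF assms(1,2)]] by simp
  ultimately have "(\<lambda>x. x) \<in> measurable (restrict_space lborel {0..T} \<Otimes>\<^sub>M M) (restrict_space borel {0..T} \<Otimes>\<^sub>M aug_filt M W1 W2 T)"
    by (rule measurable_Pair[where f=fst and g=snd, simplified])
  from measurable_comp[OF this progressive]
  have "(\<lambda>(s, \<omega>). a s \<omega>) \<in> borel_measurable (restrict_space lborel {0..T} \<Otimes>\<^sub>M M)"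
    by (simp add: comp_def)
  from measurable_comp[OF measurable_pair_swap' this]
  have swapped: "(\<lambda>(\<omega>, s). a s \<omega>) \<in> borel_measurable (M \<Otimes>\<^sub>M restrict_space lborel {0..T})"
    by (simp add: comp_def case_prod_beta)
  interpret R: finite_measure "restrict_space lborel {0..T}"
    by (intro finite_measureI) (simp add: emeasure_restrict_space T)
  have "(\<lambda>\<omega>. \<integral>s. a s \<omega> \<partial>restrict_space lborel {0..T}) \<in> borel_measurable M"
    using swapped by (intro R.borel_measurable_lebesgue_integral) simp
  then show ?thesis
    by (simp add: integral_restrict_space set_lebesgue_integral_def)
qed

lemma (in prob_space) normal_distributed_moments:
  assumes D: "distributed M lborel X (normal_density 0 (sqrt t))" and t: "t > 0"
  shows "integrable M X" "integrable M (\<lambda>\<omega>. (X \<omega>)\<^sup>2)" "expectation X = 0"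
    "expectation (\<lambda>\<omega>. (X \<omega>)\<^sup>2) = t"
proof -
  have s: "0 < sqrt t" using t by simp
  show "integrable M X"
    using distributed_integrable_var[OF D] integrable_normal_moment_nz_1[OF s] by simp
  have "integrable lborel (\<lambda>x. normal_density 0 (sqrt t) x * (x - 0)^2)"
    by (rule integrable_normal_moment[OF s])
  then show "integrable M (\<lambda>\<omega>. (X \<omega>)\<^sup>2)"
    using distributed_integrable[OF D, of "\<lambda>x. x\<^sup>2"] by simp
  show e: "expectation X = 0" using normal_distributed_expectation[OF s D] .
  show "expectation (\<lambda>\<omega>. (X \<omega>)\<^sup>2) = t"
    using normal_distributed_variance[OF s D] e t by simp
qed

lemma (in prob_space) indep_normal_lincomb_second_moment:
  assumes X: "distributed M lborel X (normal_density 0 (sqrt t))"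
    and Y: "distributed M lborel Y (normal_density 0 (sqrt t))"
    and XY: "indep_var borel X borel Y" and t: "t > 0"
  shows "integrable M (\<lambda>\<omega>. (a * X \<omega> + b * Y \<omega>)\<^sup>2)"
    "expectation (\<lambda>\<omega>. (a * X \<omega> + b * Y \<omega>)\<^sup>2) = (a\<^sup>2 + b\<^sup>2) * t"
proof -
  note mX = normal_distributed_moments[OF X t] and mY = normal_distributed_moments[OF Y t]
  have IXY: "integrable M (\<lambda>\<omega>. X \<omega> * Y \<omega>)"
    using indep_var_integrable[OF XY mX(1) mY(1)] .
  have EXY: "expectation (\<lambda>\<omega>. X \<omega> * Y \<omega>) = 0"
    using indep_var_lebesgue_integral[OF XY mX(1) mY(1)] mX(3) by simp
  have expand: "(\<lambda>\<omega>. (a * X \<omega> + b * Y \<omega>)\<^sup>2)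
      = (\<lambda>\<omega>. a\<^sup>2 * (X \<omega>)\<^sup>2 + 2 * a * b * (X \<omega> * Y \<omega>) + b\<^sup>2 * (Y \<omega>)\<^sup>2)"
    by (simp add: power2_eq_square algebra_simps)
  show "integrable M (\<lambda>\<omega>. (a * X \<omega> + b * Y \<omega>)\<^sup>2)"
    unfolding expand using mX mY IXY by simp
  have "expectation (\<lambda>\<omega>. (a * X \<omega> + b * Y \<omega>)\<^sup>2) = a\<^sup>2 * t + 2 * a * b * 0 + b\<^sup>2 * t"
    unfolding expand using mX mY IXY EXY by simp
  then show "expectation (\<lambda>\<omega>. (a * X \<omega> + b * Y \<omega>)\<^sup>2) = (a\<^sup>2 + b\<^sup>2) * t"
    by (simp add: algebra_simps)
qed

lemma (in prob_space) indep_var_of_indep_rv_sigma: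
  assumes I: "indep_sets F I" and ij: "i \<in> I" "j \<in> I" "i \<noteq> j"
    and F: "F i = rv_sigma M X" "F j = rv_sigma M Y"
    and X: "X \<in> borel_measurable M" and Y: "Y \<in> borel_measurable M"
  shows "indep_var borel X borel Y"
proof -
  have generated: "sigma_sets (space M) {Z -` A \<inter> space M | A. A \<in> sets borel} = rv_sigma M Z"
    for Z :: "'a \<Rightarrow> real"
    using sets_vimage_algebra[of "space M" Z borel] sets_vimage_algebra2[of Z "space M" borel]
    unfolding rv_sigma_def by simp
  have events: "rv_sigma M Z \<subseteq> events" if "Z \<in> borel_measurable M" for Z :: "'a \<Rightarrow> real"
    using that unfolding rv_sigma_def by (auto intro: measurable_sets)
  have "indep_set (rv_sigma M X) (rv_sigma M Y)"
    unfolding indep_sets2_eq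
  proof (intro conjI ballI events X Y)
    fix A B assume "A \<in> rv_sigma M X" "B \<in> rv_sigma M Y"
    then have "prob (\<Inter>k\<in>{i, j}. (\<lambda>k. if k = i then A else B) k)
        = (\<Prod>k\<in>{i, j}. prob ((\<lambda>k. if k = i then A else B) k))"
      using ij F by (intro indep_setsD[OF I]) auto
    then show "prob (A \<inter> B) = prob A * prob B" using ij(3) by (simp add: Int_commute)
  qed
  then show ?thesis
    unfolding indep_var_eq generated using X Y by simp
qed

locale strong_game =
  fixes M :: "'a measure" and W1 W2 :: "real \<Rightarrow> 'a \<Rightarrow> real" and c \<rho> T :: real
  assumes brownian: "brownian_motion_2d M W1 W2"
    and T_pos: "T > 0"
    and rho: "\<rho> \<in> {-1..1}"
begin

sublocale prob_space M
  using brownian unfolding brownian_motion_2d_def by simp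

lemma measurable_W [measurable]: "W1 t \<in> borel_measurable M" "W2 t \<in> borel_measurable M"
  using brownian unfolding brownian_motion_2d_def by auto

abbreviation controls :: "(real \<Rightarrow> 'a \<Rightarrow> real) set" where
  "controls \<equiv> strong_controls M W1 W2 T"

abbreviation J :: "(real \<Rightarrow> 'a \<Rightarrow> real) \<Rightarrow> (real \<Rightarrow> 'a \<Rightarrow> real) \<Rightarrow> real" where
  "J \<equiv> J_S M c \<rho> T W1 W2"

lemma const_control: "k \<in> {-1..1} \<Longrightarrow> (\<lambda>s \<omega>. k) \<in> controls"
  unfolding strong_controls_def by auto

definition drift :: "(real \<Rightarrow> 'a \<Rightarrow> real) \<Rightarrow> 'a \<Rightarrow> real" where
  "drift a \<omega> = (\<integral>s\<in>{0..T}. a s \<omega> \<partial>lborel)"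

definition noise :: "'a \<Rightarrow> real" where
  "noise \<omega> = c * W1 T \<omega> - c * (\<rho> * W1 T \<omega> + sqrt (1 - \<rho>\<^sup>2) * W2 T \<omega>)"

lemma measurable_noise [measurable]: "noise \<in> borel_measurable M"
  unfolding noise_def by measurable

lemma measurable_drift [measurable]: "a \<in> controls \<Longrightarrow> drift a \<in> borel_measurable M"
  unfolding drift_def using T_pos by (intro borel_measurable_control_integral measurable_W) auto

lemma abs_drift_le: "a \<in> controls \<Longrightarrow> \<omega> \<in> space M \<Longrightarrow> \<bar>drift a \<omega>\<bar> \<le> T"
  unfolding drift_def strong_controls_def using T_pos
  by (intro abs_set_integral_le_length) (auto simp: abs_le_iff)

lemma drift_const: "drift (\<lambda>s \<omega>. k) \<omega> = k * T"
  unfolding drift_def using T_pos by (subst set_integral_const) auto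

lemma J_eq: "J a0 a1 = (\<integral>\<omega>. (drift a0 \<omega> - drift a1 \<omega> + noise \<omega>)\<^sup>2 \<partial>M)"
  unfolding J_S_def X1_def X2_def drift_def noise_def power2_abs
  by (intro Bochner_Integration.integral_cong) (simp_all add: algebra_simps)

lemma noise_second_moment:
  "integrable M (\<lambda>\<omega>. (noise \<omega>)\<^sup>2)" "expectation (\<lambda>\<omega>. (noise \<omega>)\<^sup>2) = 2 * (1 - \<rho>) * c\<^sup>2 * T"
proof -
  define D1 where "D1 \<omega> = W1 T \<omega> - W1 0 \<omega>" for \<omega>
  define D2 where "D2 \<omega> = W2 T \<omega> - W2 0 \<omega>" for \<omega>
  define s where "s = sqrt (1 - \<rho>\<^sup>2)"
  have [measurable]: "D1 \<in> borel_measurable M" "D2 \<in> borel_measurable M"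
    unfolding D1_def D2_def by auto
  have increments: "distributed M lborel D1 (normal_density 0 (sqrt T)) \<and>
      distributed M lborel D2 (normal_density 0 (sqrt T)) \<and>
      indep_sets (\<lambda>i::nat. if i = 0 then nat_filt M W1 W2 0
                    else if i = 1 then rv_sigma M D1 else rv_sigma M D2) {0, 1, 2}"
    using brownian T_pos unfolding brownian_motion_2d_def D1_def D2_def by force
  then have "indep_var borel D1 borel D2"
    by (rule indep_var_of_indep_rv_sigma[where i = 1 and j = 2, OF conjunct2[OF conjunct2]]) auto
  note lincomb = indep_normal_lincomb_second_moment[OF _ _ this T_pos, of "c * (1 - \<rho>)" "- c * s"]
  \<comment> \<open>the definition fixes the law of increments only, and \<open>W(0) = 0\<close> holds only almost surely\<close>
  have AE_start: "AE \<omega> in M. W1 0 \<omega> = 0 \<and> W2 0 \<omega> = 0"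
    using brownian unfolding brownian_motion_2d_def by (auto elim: AE_mp)
  have AE_noise: "AE \<omega> in M. (noise \<omega>)\<^sup>2 = (c * (1 - \<rho>) * D1 \<omega> + - c * s * D2 \<omega>)\<^sup>2"
    using AE_start by eventually_elim (simp add: noise_def D1_def D2_def s_def algebra_simps)
  have "s\<^sup>2 = 1 - \<rho>\<^sup>2"
    unfolding s_def using rho by (simp add: abs_square_le_1 abs_le_iff)
  have "((c * (1 - \<rho>))\<^sup>2 + (- c * s)\<^sup>2) * T = c\<^sup>2 * ((1 - \<rho>)\<^sup>2 + s\<^sup>2) * T"
    by algebra
  also have "\<dots> = 2 * (1 - \<rho>) * c\<^sup>2 * T"
    unfolding \<open>s\<^sup>2 = 1 - \<rho>\<^sup>2\<close> by algebra
  finally have "((c * (1 - \<rho>))\<^sup>2 + (- c * s)\<^sup>2) * T = 2 * (1 - \<rho>) * c\<^sup>2 * T" .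
  then show "integrable M (\<lambda>\<omega>. (noise \<omega>)\<^sup>2)" "expectation (\<lambda>\<omega>. (noise \<omega>)\<^sup>2) = 2 * (1 - \<rho>) * c\<^sup>2 * T"
    using lincomb increments AE_noise
    by (auto simp: integrable_cong_AE[OF _ _ AE_noise] integral_cong_AE[OF _ _ AE_noise])
qed

lemma J_diagonal: "J a a = 2 * (1 - \<rho>) * c\<^sup>2 * T"
  unfolding J_eq using noise_second_moment(2) by simp

lemma J_nonneg: "0 \<le> J a0 a1"
  unfolding J_S_def by simp

abbreviation J_bound :: real where
  "J_bound \<equiv> expectation (\<lambda>\<omega>. 8 * T\<^sup>2 + 2 * (noise \<omega>)\<^sup>2)"

lemma integrable_J_bound: "integrable M (\<lambda>\<omega>. 8 * T\<^sup>2 + 2 * (noise \<omega>)\<^sup>2)"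
  using noise_second_moment(1) by simp

lemma integrable_J_integrand:
  assumes "a0 \<in> controls" "a1 \<in> controls"
  shows "integrable M (\<lambda>\<omega>. (drift a0 \<omega> - drift a1 \<omega> + noise \<omega>)\<^sup>2)"
proof (rule Bochner_Integration.integrable_bound[OF integrable_J_bound])
  show "AE \<omega> in M. norm ((drift a0 \<omega> - drift a1 \<omega> + noise \<omega>)\<^sup>2) \<le> norm (8 * T\<^sup>2 + 2 * (noise \<omega>)\<^sup>2)"
    using assms by (intro AE_I2) (simp add: square_diff_add_le abs_drift_le)
qed (use assms in measurable)

lemma J_le_bound:
  assumes "a0 \<in> controls" "a1 \<in> controls"
  shows "J a0 a1 \<le> J_bound"
  unfolding J_eq
  using assms by (intro integral_mono integrable_J_integrand integrable_J_bound)
    (simp_all add: square_diff_add_le abs_drift_le)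

lemma J_const_sum_ge:
  assumes "a0 \<in> controls"
  shows "2 * T\<^sup>2 \<le> J a0 (\<lambda>s \<omega>. 1) + J a0 (\<lambda>s \<omega>. -1)"
proof -
  have controls_pm1: "(\<lambda>s \<omega>. 1) \<in> controls" "(\<lambda>s \<omega>. -1) \<in> controls"
    by (auto intro: const_control)
  have "2 * T\<^sup>2 = (\<integral>\<omega>. 2 * T\<^sup>2 \<partial>M)" by (simp add: prob_space)
  also have "\<dots> \<le> (\<integral>\<omega>. (drift a0 \<omega> - T + noise \<omega>)\<^sup>2 + (drift a0 \<omega> + T + noise \<omega>)\<^sup>2 \<partial>M)"
  proof (rule integral_mono)
    show "integrable M (\<lambda>\<omega>. (drift a0 \<omega> - T + noise \<omega>)\<^sup>2 + (drift a0 \<omega> + T + noise \<omega>)\<^sup>2)"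
      using integrable_J_integrand[OF assms controls_pm1(1)]
        integrable_J_integrand[OF assms controls_pm1(2)]
      by (simp add: drift_const)
    fix \<omega>
    have "(drift a0 \<omega> - T + noise \<omega>)\<^sup>2 + (drift a0 \<omega> + T + noise \<omega>)\<^sup>2
        = 2 * (drift a0 \<omega> + noise \<omega>)\<^sup>2 + 2 * T\<^sup>2"
      by (simp add: power2_eq_square algebra_simps)
    then show "2 * T\<^sup>2 \<le> (drift a0 \<omega> - T + noise \<omega>)\<^sup>2 + (drift a0 \<omega> + T + noise \<omega>)\<^sup>2"
      by simp
  qed simp
  also have "\<dots> = J a0 (\<lambda>s \<omega>. 1) + J a0 (\<lambda>s \<omega>. -1)"
    using integrable_J_integrand[OF assms controls_pm1(1)]
      integrable_J_integrand[OF assms controls_pm1(2)]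
    unfolding J_eq by (simp add: drift_const)
  finally show ?thesis .
qed

lemma lower_value_le: "lower_value_S M c \<rho> T W1 W2 \<le> 2 * (1 - \<rho>) * c\<^sup>2 * T"
  unfolding lower_value_S_def
  by (rule sup_inf_le_diagonal[where m = 0])
     (use const_control[of 0] in \<open>auto simp: J_nonneg J_diagonal\<close>)

lemma upper_value_ge: "T\<^sup>2 \<le> upper_value_S M c \<rho> T W1 W2"
  unfolding upper_value_S_def
proof (rule inf_sup_ge_of_best_response[where m = J_bound])
  fix a0 assume a0: "a0 \<in> controls"
  have "T\<^sup>2 \<le> J a0 (\<lambda>s \<omega>. 1) \<or> T\<^sup>2 \<le> J a0 (\<lambda>s \<omega>. -1)"
    using J_const_sum_ge[OF a0] by linarith
  then show "\<exists>a1\<in>controls. T\<^sup>2 \<le> J a0 a1"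
    using const_control[of 1] const_control[of "-1"] by auto
qed (use const_control[of 0] in \<open>auto simp: J_le_bound\<close>)

end

theorem mainTheorem1:
  fixes M :: "'a measure" and W1 W2 :: "real \<Rightarrow> 'a \<Rightarrow> real" and c \<rho> T :: real
  assumes "brownian_motion_2d M W1 W2"
    and "T > 0"
    and "\<rho> \<in> {-1..1}"
  shows "lower_value_S M c \<rho> T W1 W2 \<le> 2 * (1 - \<rho>) * c\<^sup>2 * T
         \<and> T\<^sup>2 \<le> upper_value_S M c \<rho> T W1 W2
         \<and> (2 * (1 - \<rho>) * c\<^sup>2 < T \<longrightarrow> lower_value_S M c \<rho> T W1 W2 < upper_value_S M c \<rho> T W1 W2)"
proof -
  interpret strong_game M W1 W2 c \<rho> T
    using assms by unfold_locales
  have "2 * (1 - \<rho>) * c\<^sup>2 < T \<Longrightarrow> 2 * (1 - \<rho>) * c\<^sup>2 * T < T\<^sup>2"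
    using T_pos by (simp add: power2_eq_square)
  then show ?thesis
    using lower_value_le upper_value_ge by auto
qed

end
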